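(* Let $\underline\phi\le\overline\phi$ and $\underline\chi\le\overline\chi$ be functions $[0,1]\to[0,1]$ such that the pairs involved satisfy (F1)–(F3), and let \[\mathcal C^{\mathrm{MM}}=\{C^{\mathrm{MM}}_{\phi,\chi}:\ \underline\phi\le\phi\le\overline\phi,\ \underline\chi\le\chi\le\overline\chi,\ \phi,\chi \text{ satisfy (F1)–(F3)}\}.\] Then $\mathcal C^{\mathrm{MM}}$ has pointwise minimal element $C^{\mathrm{MM}}_{\underline\phi,\overline\chi}$ and maximal element $C^{\mathrm{MM}}_{\overline\phi,\underline\chi}$, i.e. $C^{\mathrm{MM}}_{\underline\phi,\overline\chi}(u,v)\le C^{\mathrm{MM}}_{\phi,\chi}(u,v)\le C^{\mathrm{MM}}_{\overline\phi,\underline\chi}(u,v)$ for every $C^{\mathrm{MM}}_{\phi,\chi}\in\mathcal C^{\mathrm{MM}}$ and $u,v\in[0,1]$.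
   Context: Conditions on $\phi,\chi:[0,1]\to[0,1]$: (F1) $\phi(0)=\chi(0)=0$, $\phi(1)=\chi(1)=1$; (F2) $\phi,\chi$ non-decreasing; (F3) $\phi(u)/u$ on $(0,1]$ and $\chi_*(w)=\frac{1-\chi(w)}{w-\chi(w)}$ on $[0,1]$ (values in $[1,\infty]$) are non-increasing. Maxmin copula: $C^{\mathrm{MM}}_{\phi,\chi}(u,w)=uw+\min\{u(1-w),(\phi(u)-u)(w-\chi(w))\}$. *)

theory Defs
  imports "HOL-Analysis.Analysis"
begin

text \<open>Division by zero with positive numerator gives infinity; the case 0/0 (only at
  w = 1, chi 1 = 1) is given the value 1, the least admissible value, so that it
  imposes no constraint.\<close>
definition chi_star :: "(real \<Rightarrow> real) \<Rightarrow> real \<Rightarrow> ereal" where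
  "chi_star chi w =
     (if w - chi w = 0 then (if 1 - chi w = 0 then 1 else \<infinity>)
      else ereal ((1 - chi w) / (w - chi w)))"

definition phi_cond :: "(real \<Rightarrow> real) \<Rightarrow> bool" where
  "phi_cond phi \<longleftrightarrow>
     (\<forall>u\<in>{0..1}. phi u \<in> {0..1}) \<and>
     phi 0 = 0 \<and> phi 1 = 1 \<and>
     mono_on {0..1} phi \<and>
     antimono_on {0<..1} (\<lambda>u. phi u / u)"

definition chi_cond :: "(real \<Rightarrow> real) \<Rightarrow> bool" where
  "chi_cond chi \<longleftrightarrow>
     (\<forall>w\<in>{0..1}. chi w \<in> {0..1}) \<and>
     chi 0 = 0 \<and> chi 1 = 1 \<and>
     mono_on {0..1} chi \<and>
     (\<forall>w\<in>{0..1}. chi_star chi w \<ge> 1) \<and>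
     antimono_on {0..1} (chi_star chi)"

definition maxmin_copula :: "(real \<Rightarrow> real) \<Rightarrow> (real \<Rightarrow> real) \<Rightarrow> real \<Rightarrow> real \<Rightarrow> real" where
  "maxmin_copula phi chi u w = u * w + min (u * (1 - w)) ((phi u - u) * (w - chi w))"

definition maxmin_class ::
  "(real \<Rightarrow> real) \<Rightarrow> (real \<Rightarrow> real) \<Rightarrow> (real \<Rightarrow> real) \<Rightarrow> (real \<Rightarrow> real)
     \<Rightarrow> (real \<Rightarrow> real \<Rightarrow> real) set" where
  "maxmin_class phil phiu chil chiu =
     {maxmin_copula phi chi | phi chi.
        (\<forall>x\<in>{0..1}. phil x \<le> phi x \<and> phi x \<le> phiu x) \<and>
        (\<forall>x\<in>{0..1}. chil x \<le> chi x \<and> chi x \<le> chiu x) \<and>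
        phi_cond phi \<and> chi_cond chi}"

end

theory Submission
  imports Defs
begin

text \<open>Conditions (F1)-(F3) force \<open>\<phi> u \<ge> u\<close> and \<open>\<chi> w \<le> w\<close> on [0,1]. So the second argument
  of the minimum in the maxmin copula is the product of the nonnegative factors \<open>\<phi> u - u\<close>
  and \<open>w - \<chi> w\<close>, increasing in \<open>\<phi>\<close> and decreasing in \<open>\<chi>\<close>; hence the copula is pointwise
  monotone in \<open>\<phi>\<close> and antitone in \<open>\<chi>\<close>.\<close>

lemma phi_cond_imp_ge:
  assumes "phi_cond phi" and "u \<in> {0..1}"
  shows "u \<le> phi u"
proof (cases "u = 0")
  case True
  then show ?thesis using assms(1) by (simp add: phi_cond_def)
next
  case False
  with assms(2) have u: "0 < u" "u \<le> 1" by auto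
  have "phi 1 / 1 \<le> phi u / u"
    using assms(1) u unfolding phi_cond_def by (auto dest: monotone_onD[of _ _ _ _ u 1])
  with assms(1) have "1 \<le> phi u / u" by (simp add: phi_cond_def)
  with u show ?thesis by (simp add: le_divide_eq)
qed

lemma chi_cond_imp_le:
  assumes "chi_cond chi" and "w \<in> {0..1}"
  shows "chi w \<le> w"
proof (rule ccontr)
  assume "\<not> chi w \<le> w"
  then have neg: "w - chi w < 0" by simp
  have "chi w \<le> 1" and "1 \<le> chi_star chi w"
    using assms by (auto simp: chi_cond_def)
  then have "1 \<le> (1 - chi w) / (w - chi w)" and "(1 - chi w) / (w - chi w) \<le> 0"
    using neg by (auto simp: chi_star_def divide_nonneg_neg)
  then show False by simp
qed

lemma maxmin_copula_mono:
  assumes "u \<le> phi u" and "chi w \<le> w"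
    and "phi u \<le> phi' u" and "chi' w \<le> chi w"
  shows "maxmin_copula phi chi u w \<le> maxmin_copula phi' chi' u w"
proof -
  have "(phi u - u) * (w - chi w) \<le> (phi' u - u) * (w - chi' w)"
    using assms by (intro mult_mono) auto
  then show ?thesis unfolding maxmin_copula_def by linarith
qed

theorem proposition7:
  fixes phil phiu chil chiu :: "real \<Rightarrow> real"
  assumes "phi_cond phil" and "phi_cond phiu" and "chi_cond chil" and "chi_cond chiu"
    and "\<forall>x\<in>{0..1}. phil x \<le> phiu x"
    and "\<forall>x\<in>{0..1}. chil x \<le> chiu x"
  shows "maxmin_copula phil chiu \<in> maxmin_class phil phiu chil chiu \<and>
    maxmin_copula phiu chil \<in> maxmin_class phil phiu chil chiu \<and>
    (\<forall>C\<in>maxmin_class phil phiu chil chiu. \<forall>u\<in>{0..1}. \<forall>v\<in>{0..1}.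
           maxmin_copula phil chiu u v \<le> C u v \<and> C u v \<le> maxmin_copula phiu chil u v)"
proof (intro conjI ballI)
  show "maxmin_copula phil chiu \<in> maxmin_class phil phiu chil chiu"
    and "maxmin_copula phiu chil \<in> maxmin_class phil phiu chil chiu"
    unfolding maxmin_class_def using assms by blast+
next
  fix C and u v :: real
  assume "C \<in> maxmin_class phil phiu chil chiu" and u: "u \<in> {0..1}" and v: "v \<in> {0..1}"
  then obtain phi chi where C: "C = maxmin_copula phi chi"
    and phi: "phil u \<le> phi u" "phi u \<le> phiu u" "phi_cond phi"
    and chi: "chil v \<le> chi v" "chi v \<le> chiu v" "chi_cond chi"
    unfolding maxmin_class_def by blast
  show "maxmin_copula phil chiu u v \<le> C u v"
    unfolding C
    using maxmin_copula_mono[of u phil chiu v phi chi] phi chi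
      phi_cond_imp_ge[OF assms(1) u] chi_cond_imp_le[OF assms(4) v] by blast
  show "C u v \<le> maxmin_copula phiu chil u v"
    unfolding C
    using maxmin_copula_mono[of u phi chi v phiu chil] phi chi
      phi_cond_imp_ge[OF phi(3) u] chi_cond_imp_le[OF chi(3) v] by blast
qed

end
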